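(* For $n\ge5$, the symmetric space $\mathrm{SL}_{n+1}\mathbb R/\mathrm{SO}(n+1)$ has property $\mathbf E$.
   Context: Property $\mathbf E$ for a symmetric space $X$ of noncompact type: for every $x\in X$ with stabilizer $K$ (in the identity component of the isometry group) and every maximal flat through $x$ with tangent space $\mathcal F\subset T_xX$, putting $r=\mathrm{rank}(X)$, for any basis $\{v_1,\dots,v_r\}$ of $\mathcal F$ there is an orthonormal $3r$-frame $v_1',v_1'',v_1''',\dots,v_r',v_r'',v_r'''$ of $T_xX$ with $\mathrm{span}\{v_i',v_i'',v_i'''\}\subset(\mathrm{span}\{K_i\cdot\mathcal F\})^\perp$ for each $i$, where $K_i$ is the stabilizer of $v_i$ in $K$ acting by derivatives. *)

theory Defs
  imports "HOL-Analysis.Analysis"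
begin

text \<open>Model of X = SL_N(R)/SO(N) at the base point x = [I] (all points are
  equivalent under the transitive isometric action of SL_N(R)).  The tangent
  space T_x X is identified with p = symmetric traceless N x N matrices, with the
  (K-invariant, up to a positive scalar Killing) inner product tr(XY), which on
  symmetric matrices is the Euclidean inner product of real^'n^'n.  The
  stabilizer K = SO(N) acts on T_x X by derivatives, i.e. by conjugation.\<close>

definition tangent_p :: "(real^'n^'n) set" where
  "tangent_p = {X. transpose X = X \<and> trace X = 0}"

definition stabK :: "(real^'n^'n) set" where
  "stabK = {k. rotation_matrix k}"

definition Ad :: "real^'n^'n \<Rightarrow> real^'n^'n \<Rightarrow> real^'n^'n" where
  "Ad k X = k ** X ** transpose k"

text \<open>Tangent spaces at x of maximal flats through x are exactly the maximal
  abelian subspaces of p.\<close>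
definition abelian_subspace :: "(real^'n^'n) set \<Rightarrow> bool" where
  "abelian_subspace F \<longleftrightarrow> subspace F \<and> F \<subseteq> tangent_p \<and>
     (\<forall>X\<in>F. \<forall>Y\<in>F. X ** Y = Y ** X)"

definition maximal_flat_tangent :: "(real^'n^'n) set \<Rightarrow> bool" where
  "maximal_flat_tangent F \<longleftrightarrow> abelian_subspace F \<and>
     (\<forall>G. abelian_subspace G \<and> F \<subseteq> G \<longrightarrow> G = F)"

definition stab_of :: "real^'n^'n \<Rightarrow> (real^'n^'n) set" where
  "stab_of v = {k \<in> stabK. Ad k v = v}"

definition orth_in_tangent :: "(real^'n^'n) set \<Rightarrow> (real^'n^'n) set" where
  "orth_in_tangent S = {Y \<in> tangent_p. \<forall>Z\<in>S. Y \<bullet> Z = 0}"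

text \<open>Property E for SL_N(R)/SO(N) with N = CARD('n).  The rank r is dim F.
  The orthonormal 3r-frame is w i j, i < r, j < 3 (j = 0,1,2 for ', '', ''').\<close>
definition property_E_SL :: "'n::finite itself \<Rightarrow> bool" where
  "property_E_SL _ \<longleftrightarrow>
    (\<forall>F :: (real^'n^'n) set. maximal_flat_tangent F \<longrightarrow>
      (\<forall>v :: nat \<Rightarrow> real^'n^'n.
        (let r = dim F in
          ((\<forall>i<r. v i \<in> F) \<and> inj_on v {..<r} \<and> independent (v ` {..<r}) \<and>
            span (v ` {..<r}) = F) \<longrightarrow>
          (\<exists>w :: nat \<Rightarrow> nat \<Rightarrow> real^'n^'n.
             (\<forall>i<r. \<forall>j<3. w i j \<in> tangent_p \<and> norm (w i j) = 1) \<and>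
             (\<forall>i<r. \<forall>j<3. \<forall>i'<r. \<forall>j'<3. (i, j) \<noteq> (i', j') \<longrightarrow> w i j \<bullet> w i' j' = 0) \<and>
             (\<forall>i<r. span {w i 0, w i 1, w i 2} \<subseteq>
                orth_in_tangent (span (\<Union>k\<in>stab_of (v i). Ad k ` F)))))))"

end

theory Submission
  imports Defs
begin

(* The basis matrices v_1, ..., v_r of the abelian subspace F commute and are symmetric, so
   they are simultaneously diagonalised by an orthonormal basis u_1, ..., u_N of R^N, with
   eigenvalues lam_i(a).  If lam_i(a) ~= lam_i(b), the unit matrix (u_a u_b^T + u_b u_a^T) / sqrt 2
   lies in p and is orthogonal to every matrix commuting with v_i, in particular to Ad k F for
   every k fixing v_i.  Matrices built from distinct pairs {a, b} are orthonormal, so it suffices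
   to pick for every i three pairs separated by lam_i, all 3r pairs distinct.  By Hall's theorem
   this follows from a count: for a set S of indices the traceless matrices v_i, i in S, span an
   |S|-dimensional space meeting the scalars only in 0, so every a is separated from at least |S|
   points b by some lam_i, i in S; hence at least N |S| / 2 >= 3 |S| pairs are separated by S,
   using N >= 6. *)

section \<open>Hall's theorem and separated pairs\<close>

lemma Hall_condition_Diff_tight:
  fixes A :: "'i \<Rightarrow> 'b set"
  assumes fin: "finite I" "\<forall>i\<in>I. finite (A i)"
    and Hall: "\<forall>K\<subseteq>I. card K \<le> card (\<Union>(A ` K))"
    and J: "J \<subseteq> I" "card (\<Union>(A ` J)) \<le> card J"
  shows "\<forall>K\<subseteq>I - J. card K \<le> card (\<Union>i\<in>K. A i - \<Union>(A ` J))"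
proof (intro allI impI)
  fix K assume K: "K \<subseteq> I - J"
  have finKJ: "finite K" "finite J" using K J(1) fin(1) finite_subset by blast+
  have "card K + card J = card (K \<union> J)"
    using K finKJ by (subst card_Un_disjoint) auto
  also have "\<dots> \<le> card (\<Union>(A ` (K \<union> J)))"
    using Hall K J(1) by (meson Diff_subset le_sup_iff order_trans)
  also have "\<dots> = card ((\<Union>i\<in>K. A i - \<Union>(A ` J)) \<union> \<Union>(A ` J))"
    by (rule arg_cong[where f = card]) blast
  also have "\<dots> = card (\<Union>i\<in>K. A i - \<Union>(A ` J)) + card (\<Union>(A ` J))"
    by (rule card_Un_disjoint) (use finKJ fin(2) K J(1) in auto)
  finally show "card K \<le> card (\<Union>i\<in>K. A i - \<Union>(A ` J))" using J(2) by linarith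
qed

lemma Hall_condition_Diff_point:
  fixes A :: "'i \<Rightarrow> 'b set"
  assumes strict: "\<forall>K\<subseteq>I. K \<noteq> {} \<longrightarrow> K \<noteq> I \<longrightarrow> card K < card (\<Union>(A ` K))"
    and "i0 \<in> I"
  shows "\<forall>K\<subseteq>I - {i0}. card K \<le> card (\<Union>i\<in>K. A i - {x})"
proof (intro allI impI)
  fix K assume K: "K \<subseteq> I - {i0}"
  show "card K \<le> card (\<Union>i\<in>K. A i - {x})"
  proof (cases "K = {}")
    case False
    then have "card K < card (\<Union>(A ` K))" using strict K \<open>i0 \<in> I\<close> by blast
    moreover have "card (\<Union>(A ` K)) - 1 \<le> card (\<Union>(A ` K) - {x})"
      by (simp add: card_Diff_singleton_if)
    moreover have "(\<Union>i\<in>K. A i - {x}) = \<Union>(A ` K) - {x}" by blast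
    ultimately show ?thesis by auto
  qed simp
qed

lemma inj_on_if_disjoint_images:
  assumes "inj_on f J" "inj_on g (I - J)" "f ` J \<subseteq> X" "g ` (I - J) \<inter> X = {}"
  shows "inj_on (\<lambda>i. if i \<in> J then f i else g i) I" (is "inj_on ?h I")
proof -
  have "inj_on ?h J" "inj_on ?h (I - J)"
    using assms(1,2) inj_on_cong[of J ?h f] inj_on_cong[of "I - J" ?h g] by auto
  moreover have "?h ` J \<inter> ?h ` (I - J) = {}" using assms(3,4) by auto
  ultimately have "inj_on ?h (J \<union> (I - J))" using inj_on_Un[of ?h J "I - J"] by blast
  then show ?thesis by (rule inj_on_subset) blast
qed

theorem Hall_marriage:
  fixes A :: "'i \<Rightarrow> 'b set"
  assumes "finite I" "\<forall>i\<in>I. finite (A i)" "\<forall>J\<subseteq>I. card J \<le> card (\<Union>(A ` J))"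
  shows "\<exists>f. inj_on f I \<and> (\<forall>i\<in>I. f i \<in> A i)"
  using assms
proof (induction "card I" arbitrary: I A rule: less_induct)
  case less
  note fin = less.prems(1,2) and Hall = less.prems(3)
  consider (tight) J where "J \<subseteq> I" "J \<noteq> {}" "J \<noteq> I" "card (\<Union>(A ` J)) \<le> card J"
    | (strict) "\<forall>K\<subseteq>I. K \<noteq> {} \<longrightarrow> K \<noteq> I \<longrightarrow> card K < card (\<Union>(A ` K))"
    by (meson not_le)
  then show ?case
  proof cases
    case tight
    have smaller: "card J < card I" "card (I - J) < card I"
      by (intro psubset_card_mono; use tight(1-3) fin(1) in blast)+
    have "finite J" "\<forall>i\<in>J. finite (A i)" "\<forall>K\<subseteq>J. card K \<le> card (\<Union>(A ` K))"
      using tight(1) fin Hall finite_subset by blast+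
    then obtain f where f: "inj_on f J" "\<forall>i\<in>J. f i \<in> A i"
      using less(1)[OF smaller(1)] by blast
    obtain g where g: "inj_on g (I - J)" "\<forall>i\<in>I - J. g i \<in> A i - \<Union>(A ` J)"
      using less(1)[OF smaller(2), of "\<lambda>i. A i - \<Union>(A ` J)"] fin
        Hall_condition_Diff_tight[OF fin Hall tight(1,4)] by auto
    have "inj_on (\<lambda>i. if i \<in> J then f i else g i) I"
      by (rule inj_on_if_disjoint_images[OF f(1) g(1), of "\<Union>(A ` J)"]) (use f g in auto)
    then show ?thesis using f(2) g(2) by (intro exI[of _ "\<lambda>i. if i \<in> J then f i else g i"]) auto
  next
    case strict
    show ?thesis
    proof (cases "I = {}")
      case False
      then obtain i0 where i0: "i0 \<in> I" by blast
      then have "card {i0} \<le> card (A i0)" using Hall[rule_format, of "{i0}"] by auto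
      then obtain x where x: "x \<in> A i0" by fastforce
      have smaller: "card (I - {i0}) < card I" using i0 fin(1) by (meson card_Diff1_less)
      obtain g where g: "inj_on g (I - {i0})" "\<forall>i\<in>I - {i0}. g i \<in> A i - {x}"
        using less(1)[OF smaller, of "\<lambda>i. A i - {x}"] fin Hall_condition_Diff_point[OF strict i0]
        by auto
      have "inj_on (g(i0 := x)) I" using g i0 unfolding inj_on_def by auto
      then show ?thesis using g(2) x by (intro exI[of _ "g(i0 := x)"]) auto
    qed simp
  qed
qed

text \<open>Ordered pairs \<open>(a, b)\<close> with \<open>idx a < idx b\<close> stand for unordered pairs \<open>{a, b}\<close>.\<close>

lemma card_separated_pairs:
  fixes lam :: "'i \<Rightarrow> 'a::finite \<Rightarrow> 'b" and idx :: "'a \<Rightarrow> nat"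
  assumes "inj idx" and sep: "\<forall>a. k \<le> card {b. \<exists>i\<in>S. lam i b \<noteq> lam i a}"
  shows "CARD('a) * k \<le> 2 * card {(a, b). idx a < idx b \<and> (\<exists>i\<in>S. lam i a \<noteq> lam i b)}"
    (is "_ \<le> 2 * card ?P")
proof -
  define Q where "Q = (SIGMA a:UNIV. {b. \<exists>i\<in>S. lam i b \<noteq> lam i a})"
  have "CARD('a) * k \<le> (\<Sum>a\<in>UNIV. card {b. \<exists>i\<in>S. lam i b \<noteq> lam i a})"
    using sum_mono[of "UNIV :: 'a set" "\<lambda>_. k"] sep by simp
  also have "\<dots> = card Q" unfolding Q_def by (simp add: card_SigmaI)
  also have "\<dots> \<le> card (?P \<union> prod.swap ` ?P)"
  proof (rule card_mono)
    show "Q \<subseteq> ?P \<union> prod.swap ` ?P"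
    proof
      fix p assume "p \<in> Q"
      then obtain a b where p: "p = (a, b)" and i: "\<exists>i\<in>S. lam i b \<noteq> lam i a"
        unfolding Q_def by auto
      then have "idx a \<noteq> idx b" using \<open>inj idx\<close> by (auto dest: injD)
      then have "idx a < idx b \<or> idx b < idx a" by linarith
      moreover have "\<exists>i\<in>S. lam i a \<noteq> lam i b" using i by metis
      ultimately show "p \<in> ?P \<union> prod.swap ` ?P" using i p by (auto simp: image_iff)
    qed
  qed simp
  also have "\<dots> \<le> card ?P + card (prod.swap ` ?P)" by (rule card_Un_le)
  also have "\<dots> \<le> 2 * card ?P" using card_image_le[of ?P prod.swap] by simp
  finally show ?thesis .
qed

lemma separating_pairs_exist:
  fixes lam :: "'i \<Rightarrow> 'a::finite \<Rightarrow> 'b" and idx :: "'a \<Rightarrow> nat"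
  assumes "inj idx" "finite I" "2 * m \<le> CARD('a)"
    and sep: "\<forall>S\<subseteq>I. \<forall>a. card S \<le> card {b. \<exists>i\<in>S. lam i b \<noteq> lam i a}"
  shows "\<exists>f. inj_on f (I \<times> {..<m}) \<and> (\<forall>i\<in>I. \<forall>j<m.
           idx (fst (f (i, j))) < idx (snd (f (i, j))) \<and>
           lam i (fst (f (i, j))) \<noteq> lam i (snd (f (i, j))))"
proof -
  define Sep where "Sep i = {(a, b). idx a < idx b \<and> lam i a \<noteq> lam i b}" for i
  have "\<exists>f. inj_on f (I \<times> {..<m}) \<and> (\<forall>t\<in>I \<times> {..<m}. f t \<in> Sep (fst t))"
  proof (rule Hall_marriage)
    show "\<forall>T\<subseteq>I \<times> {..<m}. card T \<le> card (\<Union>t\<in>T. Sep (fst t))"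
    proof (intro allI impI)
      fix T assume T: "T \<subseteq> I \<times> {..<m}"
      have "finite (fst ` T)" using T \<open>finite I\<close> finite_subset by fastforce
      have "card T \<le> card (fst ` T \<times> {..<m})"
        using T \<open>finite (fst ` T)\<close> by (intro card_mono) force+
      also have "\<dots> = m * card (fst ` T)" by (simp add: card_cartesian_product)
      also have "\<dots> \<le> card {(a, b). idx a < idx b \<and> (\<exists>i\<in>fst ` T. lam i a \<noteq> lam i b)}"
      proof -
        have "fst ` T \<subseteq> I" using T by auto
        then have "\<forall>a. card (fst ` T) \<le> card {b. \<exists>i\<in>fst ` T. lam i b \<noteq> lam i a}"
          using sep by blast
        from card_separated_pairs[OF \<open>inj idx\<close> this]
        show ?thesis using mult_le_mono1[OF \<open>2 * m \<le> CARD('a)\<close>, of "card (fst ` T)"] by linarith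
      qed
      also have "{(a, b). idx a < idx b \<and> (\<exists>i\<in>fst ` T. lam i a \<noteq> lam i b)} = (\<Union>t\<in>T. Sep (fst t))"
        unfolding Sep_def by auto
      finally show "card T \<le> card (\<Union>t\<in>T. Sep (fst t))" .
    qed
  qed (use \<open>finite I\<close> in auto)
  then show ?thesis unfolding Sep_def by (auto split: prod.splits)
qed

section \<open>Simultaneous diagonalisation of commuting symmetric matrices\<close>

lemma symmetric_matrix_inner_commute:
  fixes A :: "real^'n^'n"
  assumes "transpose A = A"
  shows "x \<bullet> (A *v y) = (A *v x) \<bullet> y"
proof -
  have "x \<bullet> (A *v y) = (x v* A) \<bullet> y" by (simp add: dot_lmul_matrix)
  also have "x v* A = transpose A *v x" by simp
  finally show ?thesis using assms by simp
qed

lemma psd_symmetric_form_zero_imp_kernel: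
  fixes B :: "real^'n^'n"
  assumes symB: "transpose B = B" and U: "subspace U" "\<forall>z\<in>U. B *v z \<in> U"
    and psd: "\<forall>z\<in>U. 0 \<le> z \<bullet> (B *v z)" and x: "x \<in> U" "x \<bullet> (B *v x) = 0"
  shows "B *v x = 0"
proof -
  define y where "y = B *v x"
  define c where "c = y \<bullet> y"
  define d where "d = y \<bullet> (B *v y)"
  have "y \<in> U" using U x y_def by auto
  then have "d \<ge> 0" using psd d_def by simp
  have quad: "0 \<le> 2 * t * c + t\<^sup>2 * d" for t
  proof -
    have "x + t *\<^sub>R y \<in> U" using x(1) \<open>y \<in> U\<close> U(1) by (simp add: subspace_add subspace_scale)
    then have "0 \<le> (x + t *\<^sub>R y) \<bullet> (B *v (x + t *\<^sub>R y))" using psd by blast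
    also have "\<dots> = x \<bullet> (B *v x) + t * (x \<bullet> (B *v y)) + t * (y \<bullet> (B *v x)) + t\<^sup>2 * d"
      by (simp add: d_def matrix_vector_right_distrib matrix_vector_mult_scaleR inner_add_left
          inner_add_right power2_eq_square algebra_simps)
    also have "x \<bullet> (B *v y) = c"
      using symmetric_matrix_inner_commute[OF symB, of x y] by (simp add: c_def y_def inner_commute)
    finally show ?thesis using x(2) by (simp add: c_def y_def algebra_simps)
  qed
  have "c = 0"
  proof (rule ccontr)
    assume "c \<noteq> 0"
    \<comment> \<open>the quadratic form is negative at \<open>t = - c / (d + 1)\<close>\<close>
    define s where "s = 1 / (d + 1)"
    have "s > 0" "s * d < 1" using \<open>d \<ge> 0\<close> by (simp_all add: s_def field_simps)
    then have "c\<^sup>2 * (s * (s * d - 2)) < 0" using \<open>c \<noteq> 0\<close> by (simp add: mult_pos_neg)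
    moreover have "2 * (- c * s) * c + (- c * s)\<^sup>2 * d = c\<^sup>2 * (s * (s * d - 2))"
      by (simp add: power2_eq_square algebra_simps)
    ultimately show False using quad[of "- c * s"] by linarith
  qed
  then show ?thesis by (simp add: c_def y_def)
qed

lemma symmetric_matrix_has_eigenvector:
  fixes A :: "real^'n^'n"
  assumes symA: "transpose A = A" and U: "subspace U" "U \<noteq> {0}" "\<forall>x\<in>U. A *v x \<in> U"
  shows "\<exists>x\<in>U. x \<noteq> 0 \<and> (\<exists>\<mu>. A *v x = \<mu> *\<^sub>R x)"
proof -
  define S where "S = sphere 0 1 \<inter> U"
  have "compact S"
    unfolding S_def using U by (intro compact_Int_closed compact_sphere closed_subspace)
  obtain z where z: "z \<in> U" "z \<noteq> 0" using U subspace_0 by blast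
  then have "z /\<^sub>R norm z \<in> S" unfolding S_def using U by (auto simp: subspace_scale)
  moreover have "continuous_on S (\<lambda>x. x \<bullet> (A *v x))"
    by (intro continuous_intros linear_continuous_on) (auto simp: matrix_vector_mul_linear)
  ultimately obtain x0 where x0: "x0 \<in> S" and max: "\<forall>y\<in>S. y \<bullet> (A *v y) \<le> x0 \<bullet> (A *v x0)"
    using continuous_attains_sup[OF \<open>compact S\<close>] by blast
  \<comment> \<open>the maximal Rayleigh quotient \<open>l\<close> makes \<open>l I - A\<close> positive semidefinite on \<open>U\<close>\<close>
  define l where "l = x0 \<bullet> (A *v x0)"
  define B where "B = l *\<^sub>R mat 1 - A"
  have Bv: "B *v z = l *\<^sub>R z - A *v z" for z
    unfolding B_def by (simp add: matrix_vector_mult_diff_rdistrib flip: scaleR_matrix_vector_assoc)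
  have symB: "transpose B = B" unfolding B_def using symA
    by (simp add: transpose_def vec_eq_iff mat_def)
  have x0U: "x0 \<in> U" and "norm x0 = 1" using x0 unfolding S_def by auto
  then have "x0 \<bullet> (B *v x0) = 0" by (simp add: Bv inner_diff_right l_def norm_eq_1)
  moreover have "\<forall>z\<in>U. B *v z \<in> U" using U by (simp add: Bv subspace_diff subspace_scale)
  moreover have "\<forall>z\<in>U. 0 \<le> z \<bullet> (B *v z)"
  proof
    fix z assume "z \<in> U"
    show "0 \<le> z \<bullet> (B *v z)"
    proof (cases "z = 0")
      case False
      then have "z /\<^sub>R norm z \<in> S" unfolding S_def using \<open>z \<in> U\<close> U by (auto simp: subspace_scale)
      then have "(z /\<^sub>R norm z) \<bullet> (A *v (z /\<^sub>R norm z)) \<le> l" using max l_def by auto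
      then have "z \<bullet> (A *v z) \<le> l * (norm z)\<^sup>2" using False
        by (simp add: matrix_vector_mult_scaleR power2_eq_square field_simps)
      then show ?thesis by (simp add: Bv inner_diff_right power2_norm_eq_inner)
    qed simp
  qed
  ultimately have "B *v x0 = 0" using psd_symmetric_form_zero_imp_kernel[OF symB U(1)] x0U by blast
  then have "A *v x0 = l *\<^sub>R x0" by (simp add: Bv)
  moreover have "x0 \<noteq> 0" using \<open>norm x0 = 1\<close> by auto
  ultimately show ?thesis using x0U by blast
qed

lemma subspace_eigenvectors_in:
  fixes A :: "real^'n^'n"
  assumes "subspace U"
  shows "subspace {x \<in> U. A *v x = \<mu> *\<^sub>R x}"
  using assms unfolding subspace_def
  by (auto simp: matrix_vector_right_distrib matrix_vector_mult_scaleR algebra_simps)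

lemma commuting_symmetric_matrices_common_eigenvector:
  fixes M :: "(real^'n^'n) set"
  assumes "finite M" "\<forall>A\<in>M. transpose A = A" "\<forall>A\<in>M. \<forall>B\<in>M. A ** B = B ** A"
    and "subspace U" "U \<noteq> {0}" "\<forall>A\<in>M. \<forall>x\<in>U. A *v x \<in> U"
  shows "\<exists>x\<in>U. x \<noteq> 0 \<and> (\<forall>A\<in>M. \<exists>\<mu>. A *v x = \<mu> *\<^sub>R x)"
  using assms
proof (induction M arbitrary: U rule: finite_induct)
  case empty
  then show ?case using subspace_0 by blast
next
  case (insert A M U)
  obtain x0 \<mu> where "x0 \<in> U" "x0 \<noteq> 0" "A *v x0 = \<mu> *\<^sub>R x0"
    using symmetric_matrix_has_eigenvector[of A U] insert.prems by auto
  define E where "E = {x \<in> U. A *v x = \<mu> *\<^sub>R x}"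
  have "subspace E" unfolding E_def using subspace_eigenvectors_in insert.prems(3) by blast
  moreover have "E \<noteq> {0}" using \<open>x0 \<in> U\<close> \<open>x0 \<noteq> 0\<close> \<open>A *v x0 = \<mu> *\<^sub>R x0\<close> unfolding E_def by auto
  moreover have "\<forall>B\<in>M. \<forall>x\<in>E. B *v x \<in> E"
  proof (intro ballI)
    fix B x assume "B \<in> M" "x \<in> E"
    have "A *v (B *v x) = B *v (A *v x)"
      using insert.prems(2) \<open>B \<in> M\<close> by (metis insertCI matrix_vector_mul_assoc)
    then show "B *v x \<in> E"
      using insert.prems(5) \<open>B \<in> M\<close> \<open>x \<in> E\<close> unfolding E_def
      by (auto simp: matrix_vector_mult_scaleR)
  qed
  ultimately obtain x where "x \<in> E" "x \<noteq> 0" "\<forall>B\<in>M. \<exists>\<mu>. B *v x = \<mu> *\<^sub>R x"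
    using insert.IH insert.prems(1,2) by blast
  then show ?case unfolding E_def by auto
qed

lemma symmetric_matrix_invariant_orthogonal_complement:
  fixes A :: "real^'n^'n"
  assumes "transpose A = A" "A *v x = \<mu> *\<^sub>R x" "\<forall>y\<in>U. A *v y \<in> U"
  shows "\<forall>y\<in>{y \<in> U. x \<bullet> y = 0}. A *v y \<in> {y \<in> U. x \<bullet> y = 0}"
  using assms symmetric_matrix_inner_commute[OF assms(1), of x] by auto

lemma subspace_subset_span_insert_orthogonal_complement:
  assumes "subspace U" "x \<in> U" "x \<bullet> x = 1"
  shows "U \<subseteq> span (insert x {y \<in> U. x \<bullet> y = 0})"
proof
  fix y assume "y \<in> U"
  have "y - (x \<bullet> y) *\<^sub>R x \<in> {y \<in> U. x \<bullet> y = 0}"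
    using assms \<open>y \<in> U\<close> by (auto simp: inner_diff_right subspace_diff subspace_scale)
  then have "y - (x \<bullet> y) *\<^sub>R x + (x \<bullet> y) *\<^sub>R x \<in> span (insert x {y \<in> U. x \<bullet> y = 0})"
    by (intro span_add span_scale) (auto intro: span_base)
  then show "y \<in> span (insert x {y \<in> U. x \<bullet> y = 0})" by simp
qed

lemma commuting_symmetric_matrices_orthonormal_eigenvectors:
  fixes M :: "(real^'n^'n) set"
  assumes M: "finite M" "\<forall>A\<in>M. transpose A = A" "\<forall>A\<in>M. \<forall>B\<in>M. A ** B = B ** A"
    and U: "subspace U" "\<forall>A\<in>M. \<forall>x\<in>U. A *v x \<in> U"
  shows "\<exists>Bs \<subseteq> U. (\<forall>x\<in>Bs. norm x = 1 \<and> (\<forall>A\<in>M. \<exists>\<mu>. A *v x = \<mu> *\<^sub>R x)) \<and>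
      pairwise orthogonal Bs \<and> span Bs = U"
  using U
proof (induction "dim U" arbitrary: U rule: less_induct)
  case less
  show ?case
  proof (cases "U = {0}")
    case False
    obtain x where x: "x \<in> U" "x \<noteq> 0" "\<forall>A\<in>M. \<exists>\<mu>. A *v x = \<mu> *\<^sub>R x"
      using commuting_symmetric_matrices_common_eigenvector[OF M less.prems(1) False less.prems(2)]
      by blast
    define x1 where "x1 = x /\<^sub>R norm x"
    have x1: "x1 \<in> U" "norm x1 = 1" "\<forall>A\<in>M. \<exists>\<mu>. A *v x1 = \<mu> *\<^sub>R x1"
      using x less.prems(1) by (auto simp: x1_def subspace_scale matrix_vector_mult_scaleR)
    then have "x1 \<bullet> x1 = 1" by (simp add: norm_eq_1)
    define U' where "U' = {y \<in> U. x1 \<bullet> y = 0}"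
    have "subspace U'" using less.prems(1) unfolding U'_def subspace_def
      by (auto simp: inner_add_right)
    moreover have "\<forall>A\<in>M. \<forall>y\<in>U'. A *v y \<in> U'"
    proof
      fix A assume "A \<in> M"
      then obtain \<mu> where "A *v x1 = \<mu> *\<^sub>R x1" using x1(3) by blast
      then show "\<forall>y\<in>U'. A *v y \<in> U'" unfolding U'_def
        using symmetric_matrix_invariant_orthogonal_complement M(2) less.prems(2) \<open>A \<in> M\<close> by blast
    qed
    moreover have "dim U' < dim U"
    proof -
      have "U' \<subseteq> U" "x1 \<in> U - U'" using x1(1) \<open>x1 \<bullet> x1 = 1\<close> unfolding U'_def by auto
      then have "U' \<subset> U" by blast
      then show ?thesis using dim_psubset[of U' U] span_eq_iff[THEN iffD2, OF \<open>subspace U'\<close>]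
          span_eq_iff[THEN iffD2, OF less.prems(1)] by simp
    qed
    ultimately obtain Bs where Bs: "Bs \<subseteq> U'" "\<forall>x\<in>Bs. norm x = 1 \<and> (\<forall>A\<in>M. \<exists>\<mu>. A *v x = \<mu> *\<^sub>R x)"
      "pairwise orthogonal Bs" "span Bs = U'"
      using less.hyps[of U'] by blast
    have "span (insert x1 Bs) = U"
    proof
      show "span (insert x1 Bs) \<subseteq> U"
        using Bs(1) x1(1) less.prems(1) unfolding U'_def by (intro span_minimal) auto
      have "U' \<subseteq> span (insert x1 Bs)" using Bs(4) span_mono[of Bs "insert x1 Bs"] by blast
      then have "insert x1 U' \<subseteq> span (insert x1 Bs)" by (simp add: span_base)
      then have "span (insert x1 U') \<subseteq> span (insert x1 Bs)" by (simp add: span_minimal)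
      then show "U \<subseteq> span (insert x1 Bs)"
        using subspace_subset_span_insert_orthogonal_complement[OF less.prems(1) x1(1)
            \<open>x1 \<bullet> x1 = 1\<close>]
        unfolding U'_def by blast
    qed
    moreover have "pairwise orthogonal (insert x1 Bs)"
    proof -
      have "\<forall>y\<in>Bs. orthogonal x1 y" using Bs(1) unfolding U'_def orthogonal_def by blast
      then show ?thesis using Bs(3) orthogonal_commute unfolding pairwise_insert by blast
    qed
    moreover have "insert x1 Bs \<subseteq> U" using Bs(1) x1(1) unfolding U'_def by blast
    ultimately show ?thesis using Bs(2) x1(2,3) by (intro exI[of _ "insert x1 Bs"]) auto
  qed (rule exI[of _ "{}"], auto)
qed

definition diagonalizes :: "('n \<Rightarrow> real^'n) \<Rightarrow> real^'n^'n \<Rightarrow> bool" where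
  "diagonalizes u X \<longleftrightarrow> (\<forall>a. X *v u a = (u a \<bullet> (X *v u a)) *\<^sub>R u a)"

lemma subspace_diagonalizes: "subspace {X. diagonalizes u X}"
  unfolding subspace_def diagonalizes_def
  by (auto simp: matrix_vector_mult_add_rdistrib inner_add_right scaleR_add_left
      simp flip: scaleR_matrix_vector_assoc) (metis scaleR_scaleR)

lemma commuting_symmetric_matrices_orthonormal_eigenbasis:
  fixes M :: "(real^'n^'n) set"
  assumes "finite M" "\<forall>A\<in>M. transpose A = A" "\<forall>A\<in>M. \<forall>B\<in>M. A ** B = B ** A"
  obtains u :: "'n \<Rightarrow> real^'n"
  where "\<forall>a b. u a \<bullet> u b = (if a = b then 1 else 0)" "span (range u) = UNIV"
    "\<forall>A\<in>M. diagonalizes u A"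
proof -
  obtain Bs where Bs: "\<forall>x\<in>Bs. norm x = 1 \<and> (\<forall>A\<in>M. \<exists>\<mu>. A *v x = \<mu> *\<^sub>R x)"
    "pairwise orthogonal Bs" "span Bs = UNIV"
    using commuting_symmetric_matrices_orthonormal_eigenvectors[OF assms, of UNIV] by auto
  have "independent Bs" using Bs(1,2) pairwise_orthogonal_independent by force
  then have "card Bs = CARD('n)"
    using dim_span_eq_card_independent[of Bs] Bs(3) by simp
  then obtain u where u: "bij_betw u (UNIV :: 'n set) Bs"
    using finite_same_card_bij[OF finite] finiteI_independent[OF \<open>independent Bs\<close>] by metis
  then have ru: "range u = Bs" and "inj u" by (auto simp: bij_betw_def)
  have orthonormal: "\<forall>a b. u a \<bullet> u b = (if a = b then 1 else 0)"
    using Bs(1,2) ru \<open>inj u\<close> unfolding pairwise_def orthogonal_def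
    by (auto simp: norm_eq_1 inj_eq)
  moreover have "\<forall>A\<in>M. diagonalizes u A"
    unfolding diagonalizes_def
  proof (intro ballI allI)
    fix A a assume "A \<in> M"
    then obtain \<mu> where "A *v u a = \<mu> *\<^sub>R u a" using Bs(1) ru by blast
    then show "A *v u a = (u a \<bullet> (A *v u a)) *\<^sub>R u a" using orthonormal by simp
  qed
  ultimately show ?thesis using that Bs(3) ru by blast
qed

section \<open>The tangent space and the stabiliser action\<close>

lemma trace_scaleR: "trace (c *\<^sub>R A) = c * trace (A :: real^'n^'n)"
  by (simp add: trace_def sum_distrib_left)

lemma transpose_add: "transpose (A + B) = transpose A + transpose (B :: 'a::plus^'n^'m)"
  by (simp add: transpose_def vec_eq_iff)

lemma matrix_add_rdistrib:
  fixes A B :: "'a::semiring_1^'n^'m" and C :: "'a^'p^'n"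
  shows "(A + B) ** C = A ** C + B ** C"
  by (simp add: matrix_matrix_mult_def vec_eq_iff sum.distrib algebra_simps)

definition sym_outer :: "real^'n \<Rightarrow> real^'n \<Rightarrow> real^'n^'n" where
  "sym_outer x y = (\<chi> p q. x$p * y$q + y$p * x$q)"

lemma transpose_sym_outer: "transpose (sym_outer x y) = sym_outer x y"
  by (simp add: transpose_def sym_outer_def vec_eq_iff algebra_simps)

lemma trace_sym_outer: "trace (sym_outer x y) = 2 * (x \<bullet> y)"
  by (simp add: trace_def sym_outer_def inner_vec_def sum_distrib_left algebra_simps)

lemma sym_outer_mult_vector: "sym_outer x y *v t = (y \<bullet> t) *\<^sub>R x + (x \<bullet> t) *\<^sub>R y"
  by (simp add: sym_outer_def matrix_vector_mult_def inner_vec_def vec_eq_iff sum.distrib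
      sum_distrib_left algebra_simps)

lemma inner_sym_outer: "sym_outer x y \<bullet> Z = x \<bullet> (Z *v y) + y \<bullet> (Z *v x)"
  by (simp add: sym_outer_def matrix_vector_mult_def inner_vec_def sum.distrib
      sum_distrib_left algebra_simps)

lemma inner_sym_outer_sym_outer:
  "sym_outer x y \<bullet> sym_outer z t = 2 * ((x \<bullet> z) * (y \<bullet> t) + (x \<bullet> t) * (y \<bullet> z))"
  by (simp add: inner_sym_outer sym_outer_mult_vector inner_commute algebra_simps)

lemma
  assumes "\<forall>a b. u a \<bullet> u b = (if a = b then 1 else 0)" "a \<noteq> b"
  shows unit_sym_outer_in_tangent_p: "(1 / sqrt 2) *\<^sub>R sym_outer (u a) (u b) \<in> tangent_p"
    and norm_unit_sym_outer: "norm ((1 / sqrt 2) *\<^sub>R sym_outer (u a) (u b)) = 1"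
proof -
  show "(1 / sqrt 2) *\<^sub>R sym_outer (u a) (u b) \<in> tangent_p"
    using assms by (simp add: tangent_p_def transpose_scalar transpose_sym_outer trace_scaleR
        trace_sym_outer)
  have "sym_outer (u a) (u b) \<bullet> sym_outer (u a) (u b) = 2"
    using assms by (simp add: inner_sym_outer_sym_outer)
  then show "norm ((1 / sqrt 2) *\<^sub>R sym_outer (u a) (u b)) = 1"
    by (simp add: norm_eq_sqrt_inner)
qed

lemma inner_sym_outer_orthonormal_eq_0:
  assumes "\<forall>a b. u a \<bullet> u b = (if a = b then 1 else 0)" "(a, b) \<noteq> (c, d)" "(a, b) \<noteq> (d, c)"
  shows "sym_outer (u a) (u b) \<bullet> sym_outer (u c) (u d) = 0"
  using assms by (simp add: inner_sym_outer_sym_outer)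

lemma commuting_matrix_inner_eigenvectors_eq_0:
  fixes V Z :: "real^'n^'n"
  assumes "transpose V = V" "Z ** V = V ** Z"
    and "V *v x = \<alpha> *\<^sub>R x" "V *v y = \<beta> *\<^sub>R y" "\<alpha> \<noteq> \<beta>"
  shows "x \<bullet> (Z *v y) = 0"
proof -
  have "V *v (Z *v y) = \<beta> *\<^sub>R (Z *v y)"
    using assms(2,4) by (metis matrix_vector_mul_assoc matrix_vector_mult_scaleR)
  then have "\<beta> * (x \<bullet> (Z *v y)) = x \<bullet> (V *v (Z *v y))" by simp
  also have "\<dots> = \<alpha> * (x \<bullet> (Z *v y))"
    using symmetric_matrix_inner_commute[OF assms(1)] assms(3) by simp
  finally show ?thesis using assms(5) by simp
qed

lemma sym_outer_orthogonal_commutant: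
  fixes V Z :: "real^'n^'n"
  assumes "transpose V = V" "Z ** V = V ** Z"
    and "V *v x = \<alpha> *\<^sub>R x" "V *v y = \<beta> *\<^sub>R y" "\<alpha> \<noteq> \<beta>"
  shows "sym_outer x y \<bullet> Z = 0"
  using commuting_matrix_inner_eigenvectors_eq_0[OF assms]
    commuting_matrix_inner_eigenvectors_eq_0[OF assms(1,2,4,3)] assms(5)
  by (simp add: inner_sym_outer)

lemma subspace_tangent_p: "subspace tangent_p"
  unfolding subspace_def tangent_p_def
  by (auto simp: transpose_add trace_add transpose_scalar trace_scaleR)
    (simp_all add: transpose_def trace_def vec_eq_iff)

lemma subspace_orth_in_tangent: "subspace (orth_in_tangent S)"
proof -
  have "orth_in_tangent S = tangent_p \<inter> {Y. \<forall>Z\<in>S. orthogonal Z Y}"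
    unfolding orth_in_tangent_def orthogonal_def by (auto simp: inner_commute)
  then show ?thesis by (simp add: subspace_inter subspace_tangent_p subspace_orthogonal_to_vectors)
qed

lemma subspace_commutant: "subspace {Z :: real^'n^'n. Z ** V = V ** Z}"
  unfolding subspace_def
  by (auto simp: matrix_add_ldistrib matrix_add_rdistrib matrix_scalar_ac
      simp flip: scalar_matrix_assoc)

lemma Ad_preserves_commutant:
  fixes k V X :: "real^'n^'n"
  assumes "rotation_matrix k" "Ad k V = V" "X ** V = V ** X"
  shows "Ad k X ** V = V ** Ad k X"
proof -
  have kk: "transpose k ** k = mat 1" "k ** transpose k = mat 1"
    using assms(1) by (auto simp: rotation_matrix_def orthogonal_matrix_def)
  have "k ** V ** transpose k = V" using assms(2) by (simp add: Ad_def)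
  then have kV: "k ** V = V ** k" and ktV: "transpose k ** V = V ** transpose k"
    using kk by (metis matrix_mul_assoc matrix_mul_rid matrix_mul_lid)+
  have "Ad k X ** V = k ** X ** (transpose k ** V)" by (simp add: Ad_def matrix_mul_assoc)
  also have "\<dots> = k ** (X ** V) ** transpose k" using ktV by (simp add: matrix_mul_assoc)
  also have "\<dots> = (k ** V) ** X ** transpose k" using assms(3) by (simp add: matrix_mul_assoc)
  also have "\<dots> = V ** Ad k X" using kV by (simp add: Ad_def matrix_mul_assoc)
  finally show ?thesis .
qed

lemma span_stabilizer_orbit_subset_commutant:
  assumes "\<forall>X\<in>F. X ** V = V ** X"
  shows "span (\<Union>k\<in>stab_of V. Ad k ` F) \<subseteq> {Z. Z ** V = V ** Z}"
  using assms Ad_preserves_commutant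
  by (intro span_minimal subspace_commutant) (auto simp: stab_of_def stabK_def)

lemma span_subset_orth_in_tangent:
  assumes "W \<subseteq> tangent_p" "\<forall>w\<in>W. \<forall>Z\<in>S. w \<bullet> Z = 0"
  shows "span W \<subseteq> orth_in_tangent S"
  using assms unfolding orth_in_tangent_def
  by (intro span_minimal[OF _ subspace_orth_in_tangent[unfolded orth_in_tangent_def]]) auto

section \<open>Property E\<close>

lemma subspace_traceless: "subspace {X :: real^'n^'n. trace X = 0}"
  unfolding subspace_def by (auto simp: trace_add trace_scaleR) (simp add: trace_def)

lemma matrix_eq_scalar_if_eigenbasis:
  fixes X :: "real^'n^'n"
  assumes "span (range u) = UNIV" "\<forall>b. X *v u b = \<mu> *\<^sub>R u b"
  shows "X = \<mu> *\<^sub>R mat 1"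
proof -
  have "subspace {y. X *v y = \<mu> *\<^sub>R y}" unfolding subspace_def
    by (auto simp: matrix_vector_right_distrib matrix_vector_mult_scaleR algebra_simps)
  then have "span (range u) \<subseteq> {y. X *v y = \<mu> *\<^sub>R y}" using assms(2) by (intro span_minimal) auto
  then have "\<forall>y. X *v y = (\<mu> *\<^sub>R mat 1) *v y" using assms(1)
    by (auto simp flip: scaleR_matrix_vector_assoc)
  then show ?thesis using matrix_eq by blast
qed

lemma in_span_axes_if_support:
  fixes y :: "real^'n"
  assumes "\<forall>b. b \<notin> D \<longrightarrow> y $ b = 0"
  shows "y \<in> span ((\<lambda>b. axis b 1) ` D)"
proof -
  have "y = (\<Sum>b\<in>UNIV. y $ b *\<^sub>R axis b 1)"
    using basis_expansion[of y] by (simp add: scalar_mult_eq_scaleR)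
  also have "\<dots> = (\<Sum>b\<in>D. y $ b *\<^sub>R axis b 1)"
    using assms by (intro sum.mono_neutral_right) auto
  also have "\<dots> \<in> span ((\<lambda>b. axis b 1) ` D)" by (intro span_sum span_scale span_base) auto
  finally show ?thesis .
qed

lemma card_independent_le_card_separated:
  fixes Vs :: "(real^'n^'n) set" and u :: "'n \<Rightarrow> real^'n"
  assumes ind: "independent Vs" and Vs: "\<forall>X\<in>Vs. trace X = 0 \<and> diagonalizes u X"
    and u: "span (range u) = UNIV"
  shows "card Vs \<le> card {b. \<exists>X\<in>Vs. u b \<bullet> (X *v u b) \<noteq> u a \<bullet> (X *v u a)}" (is "_ \<le> card ?D")
proof -
  \<comment> \<open>on matrices diagonalised by \<open>u\<close>, \<open>L\<close> kills only the scalars, and the only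
    traceless scalar matrix is \<open>0\<close>\<close>
  define L where "L X = (\<chi> b. u b \<bullet> (X *v u b) - u a \<bullet> (X *v u a))" for X :: "real^'n^'n"
  have "linear L"
    by (rule linearI) (simp_all add: L_def vec_eq_iff matrix_vector_mult_add_rdistrib
        inner_add_right algebra_simps flip: scaleR_matrix_vector_assoc)
  have "X = 0" if X: "X \<in> span Vs" "L X = 0" for X
  proof -
    have "span Vs \<subseteq> {X. trace X = 0} \<inter> {X. diagonalizes u X}"
      using Vs by (intro span_minimal subspace_inter subspace_traceless subspace_diagonalizes) auto
    then have "trace X = 0" "diagonalizes u X" using X(1) by auto
    define \<mu> where "\<mu> = u a \<bullet> (X *v u a)"
    have "\<forall>b. X *v u b = \<mu> *\<^sub>R u b"
    proof
      fix b
      have "u b \<bullet> (X *v u b) = \<mu>" using arg_cong[OF X(2), of "\<lambda>y. y $ b"] by (simp add: L_def \<mu>_def)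
      then show "X *v u b = \<mu> *\<^sub>R u b" using \<open>diagonalizes u X\<close> by (metis diagonalizes_def)
    qed
    then have "X = \<mu> *\<^sub>R mat 1" using matrix_eq_scalar_if_eigenbasis[OF u] by blast
    moreover have "\<mu> = 0" using \<open>trace X = 0\<close> calculation by (simp add: trace_scaleR trace_I)
    ultimately show "X = 0" by simp
  qed
  then have "inj_on L (span Vs)" using linear_inj_on_iff_eq_0[OF \<open>linear L\<close> subspace_span] by blast
  have "L ` Vs \<subseteq> span ((\<lambda>b. axis b 1) ` ?D)"
    by (auto simp: L_def intro!: in_span_axes_if_support)
  have "card Vs = dim (L ` Vs)"
    using dim_image_eq[OF \<open>linear L\<close> \<open>inj_on L (span Vs)\<close>] dim_eq_card_independent[OF ind] by simp
  also have "\<dots> \<le> card ((\<lambda>b. axis b 1 :: real^'n) ` ?D)"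
    using \<open>L ` Vs \<subseteq> _\<close> by (intro dim_le_card) auto
  also have "\<dots> \<le> card ?D" by (rule card_image_le) simp
  finally show ?thesis .
qed

lemma sym_outer_eigenvectors_orthogonal_stabilizer_orbit:
  fixes V :: "real^'n^'n"
  assumes "transpose V = V" "\<forall>X\<in>F. X ** V = V ** X"
    and "V *v x = \<alpha> *\<^sub>R x" "V *v y = \<beta> *\<^sub>R y" "\<alpha> \<noteq> \<beta>"
  shows "\<forall>Z\<in>span (\<Union>k\<in>stab_of V. Ad k ` F). sym_outer x y \<bullet> Z = 0"
  using span_stabilizer_orbit_subset_commutant[OF assms(2)]
    sym_outer_orthogonal_commutant[OF assms(1) _ assms(3-5)] by blast

lemma abelian_subspace_separating_eigenbasis:
  fixes F :: "(real^'n^'n) set" and v :: "nat \<Rightarrow> real^'n^'n"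
  assumes "abelian_subspace F" "\<forall>i<r. v i \<in> F" "inj_on v {..<r}" "independent (v ` {..<r})"
  obtains u :: "'n \<Rightarrow> real^'n" and lam
  where "\<forall>a b. u a \<bullet> u b = (if a = b then 1 else 0)" "\<forall>i<r. \<forall>a. v i *v u a = lam i a *\<^sub>R u a"
    "\<forall>S\<subseteq>{..<r}. \<forall>a. card S \<le> card {b. \<exists>i\<in>S. lam i b \<noteq> lam i a}"
proof -
  have sym: "\<forall>i<r. transpose (v i) = v i \<and> trace (v i) = 0"
    using assms(1,2) unfolding abelian_subspace_def tangent_p_def by auto
  have M: "finite (v ` {..<r})" "\<forall>A\<in>v ` {..<r}. transpose A = A"
    "\<forall>A\<in>v ` {..<r}. \<forall>B\<in>v ` {..<r}. A ** B = B ** A"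
    using sym assms(1,2) unfolding abelian_subspace_def by auto
  obtain u :: "'n \<Rightarrow> real^'n" where u: "\<forall>a b. u a \<bullet> u b = (if a = b then 1 else 0)"
    "span (range u) = UNIV" and diag: "\<forall>A\<in>v ` {..<r}. diagonalizes u A"
    using commuting_symmetric_matrices_orthonormal_eigenbasis[OF M] by blast
  define lam where "lam i a = u a \<bullet> (v i *v u a)" for i a
  have "\<forall>i<r. \<forall>a. v i *v u a = lam i a *\<^sub>R u a"
    using diag unfolding diagonalizes_def lam_def by auto
  moreover have "\<forall>S\<subseteq>{..<r}. \<forall>a. card S \<le> card {b. \<exists>i\<in>S. lam i b \<noteq> lam i a}"
  proof (intro allI impI)
    fix S a assume S: "S \<subseteq> {..<r}"
    have "card S = card (v ` S)" using inj_on_subset[OF assms(3) S] by (simp add: card_image)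
    also have "\<dots> \<le> card {b. \<exists>X\<in>v ` S. u b \<bullet> (X *v u b) \<noteq> u a \<bullet> (X *v u a)}"
      using S sym diag independent_mono[OF assms(4) image_mono[OF S]]
      by (intro card_independent_le_card_separated u(2)) auto
    also have "{b. \<exists>X\<in>v ` S. u b \<bullet> (X *v u b) \<noteq> u a \<bullet> (X *v u a)} =
        {b. \<exists>i\<in>S. lam i b \<noteq> lam i a}"
      by (auto simp: lam_def)
    finally show "card S \<le> card {b. \<exists>i\<in>S. lam i b \<noteq> lam i a}" .
  qed
  ultimately show ?thesis using that u(1) by blast
qed

lemma orthonormal_frame_from_separating_pairs:
  fixes F :: "(real^'n^'n) set" and v :: "nat \<Rightarrow> real^'n^'n" and idx :: "'n \<Rightarrow> nat"
  assumes F: "abelian_subspace F" "\<forall>i<r. v i \<in> F"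
    and u: "\<forall>a b. u a \<bullet> u b = (if a = b then 1 else 0)"
    and eigen: "\<forall>i<r. \<forall>a. v i *v u a = lam i a *\<^sub>R u a"
    and f: "inj_on f ({..<r} \<times> {..<3::nat})"
    and sep: "\<forall>i<r. \<forall>j<3. idx (fst (f (i, j))) < idx (snd (f (i, j))) \<and>
                       lam i (fst (f (i, j))) \<noteq> lam i (snd (f (i, j)))"
  shows "\<exists>w :: nat \<Rightarrow> nat \<Rightarrow> real^'n^'n.
           (\<forall>i<r. \<forall>j<3. w i j \<in> tangent_p \<and> norm (w i j) = 1) \<and>
           (\<forall>i<r. \<forall>j<3. \<forall>i'<r. \<forall>j'<3. (i, j) \<noteq> (i', j') \<longrightarrow> w i j \<bullet> w i' j' = 0) \<and>
           (\<forall>i<r. span {w i 0, w i 1, w i 2} \<subseteq>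
              orth_in_tangent (span (\<Union>k\<in>stab_of (v i). Ad k ` F)))"
proof -
  define w where
    "w i j = (1 / sqrt 2) *\<^sub>R sym_outer (u (fst (f (i, j)))) (u (snd (f (i, j))))" for i j
  have unit: "\<forall>i<r. \<forall>j<3. w i j \<in> tangent_p \<and> norm (w i j) = 1"
    using sep unit_sym_outer_in_tangent_p[OF u] norm_unit_sym_outer[OF u] unfolding w_def
    by (metis less_irrefl)
  have orth: "\<forall>i<r. \<forall>j<3. \<forall>i'<r. \<forall>j'<3. (i, j) \<noteq> (i', j') \<longrightarrow> w i j \<bullet> w i' j' = 0"
  proof (intro allI impI)
    fix i j i' j' :: nat assume ij: "i < r" "j < 3" "i' < r" "j' < 3" "(i, j) \<noteq> (i', j')"
    obtain a b c d where ab: "f (i, j) = (a, b)" and cd: "f (i', j') = (c, d)" by fastforce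
    have "idx a < idx b" "idx c < idx d" using sep ij ab cd by force+
    then have "(a, b) \<noteq> (d, c)" by auto
    moreover have "(a, b) \<noteq> (c, d)"
      using inj_on_eq_iff[OF f, of "(i, j)" "(i', j')"] ij ab cd by auto
    ultimately show "w i j \<bullet> w i' j' = 0"
      using inner_sym_outer_orthonormal_eq_0[OF u] by (simp add: w_def ab cd)
  qed
  have sym: "transpose (v i) = v i" and comm: "\<forall>X\<in>F. X ** v i = v i ** X"
    and eig: "v i *v u a = lam i a *\<^sub>R u a" if "i < r" for i a
    using F eigen that unfolding abelian_subspace_def tangent_p_def by auto
  have "\<forall>i<r. span {w i 0, w i 1, w i 2} \<subseteq>
      orth_in_tangent (span (\<Union>k\<in>stab_of (v i). Ad k ` F))"
  proof (intro allI impI span_subset_orth_in_tangent)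
    fix i assume "i < r"
    then show "{w i 0, w i 1, w i 2} \<subseteq> tangent_p" using unit by auto
    have "\<forall>Z\<in>span (\<Union>k\<in>stab_of (v i). Ad k ` F). w i j \<bullet> Z = 0" if "j < 3" for j
      using sym_outer_eigenvectors_orthogonal_stabilizer_orbit[OF sym[OF \<open>i < r\<close>] comm[OF \<open>i < r\<close>]
          eig[OF \<open>i < r\<close>] eig[OF \<open>i < r\<close>]] sep \<open>i < r\<close> that
      unfolding w_def by simp
    then show "\<forall>y\<in>{w i 0, w i 1, w i 2}. \<forall>Z\<in>span (\<Union>k\<in>stab_of (v i). Ad k ` F). y \<bullet> Z = 0"
      by auto
  qed
  then show ?thesis using unit orth by blast
qed

lemma abelian_subspace_orthonormal_frame:
  fixes F :: "(real^'n^'n) set" and v :: "nat \<Rightarrow> real^'n^'n"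
  assumes N: "CARD('n) \<ge> 6" and F: "abelian_subspace F"
    and v: "\<forall>i<r. v i \<in> F" "inj_on v {..<r}" "independent (v ` {..<r})"
  shows "\<exists>w :: nat \<Rightarrow> nat \<Rightarrow> real^'n^'n.
           (\<forall>i<r. \<forall>j<3. w i j \<in> tangent_p \<and> norm (w i j) = 1) \<and>
           (\<forall>i<r. \<forall>j<3. \<forall>i'<r. \<forall>j'<3. (i, j) \<noteq> (i', j') \<longrightarrow> w i j \<bullet> w i' j' = 0) \<and>
           (\<forall>i<r. span {w i 0, w i 1, w i 2} \<subseteq>
              orth_in_tangent (span (\<Union>k\<in>stab_of (v i). Ad k ` F)))"
proof -
  obtain u :: "'n \<Rightarrow> real^'n" and lam where u: "\<forall>a b. u a \<bullet> u b = (if a = b then 1 else 0)"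
    and eigen: "\<forall>i<r. \<forall>a. v i *v u a = lam i a *\<^sub>R u a"
    and bound: "\<forall>S\<subseteq>{..<r}. \<forall>a. card S \<le> card {b. \<exists>i\<in>S. lam i b \<noteq> lam i a}"
    by (rule abelian_subspace_separating_eigenbasis[OF F v])
  obtain idx :: "'n \<Rightarrow> nat" where "inj idx"
    using finite_imp_inj_to_nat_seg[of "UNIV :: 'n set"] by auto
  then obtain f where f: "inj_on f ({..<r} \<times> {..<3::nat})" and
    sep: "\<forall>i<r. \<forall>j<3. idx (fst (f (i, j))) < idx (snd (f (i, j))) \<and>
                       lam i (fst (f (i, j))) \<noteq> lam i (snd (f (i, j)))"
    using separating_pairs_exist[of idx "{..<r}" 3 lam] N bound by auto
  show ?thesis by (rule orthonormal_frame_from_separating_pairs[OF F v(1) u eigen f sep])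
qed

theorem proposition11p1:
  assumes "CARD('n::finite) \<ge> 6"
  shows "property_E_SL TYPE('n)"
  unfolding property_E_SL_def Let_def maximal_flat_tangent_def
  by (intro allI impI abelian_subspace_orthonormal_frame[OF assms]) auto

end
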